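(* Let $Q$ be a quiver without oriented cycles and $v_0\in Q_0$ a vertex whose only incident arrows are arrows $a_1,\dots,a_l$ with $ta_i=v_i$, $ha_i=v_0$, and a single arrow $b$ with $tb=v_0$, $hb=w$. Let $\overline{Q}$ be the quiver with $\overline{Q}_0=Q_0\setminus\{v_0\}$ and $\overline{Q}_1=(Q_1\setminus\{b,a_1,\dots,a_l\})\cup\{ba_1,\dots,ba_l\}$, where $ba_i$ is an arrow from $v_i$ to $w$. If $Q$ satisfies property (S), then so does $\overline{Q}$.
   Context: Work over an algebraically closed field $k$ of characteristic zero. For a representation $W$ of dimension vector $\beta$, $S(W)=\{\sigma\in\mathbb{Z}^{Q_0}\mid\exists f\in\operatorname{SI}(Q,\beta)_\sigma,\ f(W)\neq0\}$, where $\operatorname{SI}(Q,\beta)_\sigma$ is the space of polynomial functions on $\operatorname{Rep}(Q,\beta)$ semi-invariant of weight $g\mapsto\prod_x\det(g(x))^{\sigma(x)}$ under $\operatorname{GL}(\beta)=\prod_x\operatorname{GL}(\beta(x))$ acting by $(g\cdot W)(a)=g(ha)W(a)g(ta)^{-1}$. A set $S$ is saturated if $n\sigma\in S$, $n\ge1$, implies $\sigma\in S$. A quiver has property (S) if $S(W)$ is saturated for all of its representations $W$. *)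

theory Defs
  imports "HOL-Computational_Algebra.Polynomial"
          "Jordan_Normal_Form.Determinant"
          "Jordan_Normal_Form.Gauss_Jordan_Elimination"
begin

record ('v, 'e) quiver =
  Q0 :: "'v set"
  Q1 :: "'e set"
  tl :: "'e \<Rightarrow> 'v"
  hd :: "'e \<Rightarrow> 'v"

definition wf_quiver :: "('v, 'e) quiver \<Rightarrow> bool" where
  "wf_quiver Q \<longleftrightarrow> finite (Q0 Q) \<and> finite (Q1 Q) \<and>
     (\<forall>a\<in>Q1 Q. tl Q a \<in> Q0 Q \<and> hd Q a \<in> Q0 Q)"

definition no_oriented_cycles :: "('v, 'e) quiver \<Rightarrow> bool" where
  "no_oriented_cycles Q \<longleftrightarrow> acyclic {(tl Q a, hd Q a) | a. a \<in> Q1 Q}"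

definition Rep :: "('v, 'e) quiver \<Rightarrow> ('v \<Rightarrow> nat) \<Rightarrow> ('e \<Rightarrow> 'k::field mat) set" where
  "Rep Q \<beta> = {W. \<forall>a\<in>Q1 Q. W a \<in> carrier_mat (\<beta> (hd Q a)) (\<beta> (tl Q a))}"

definition GL :: "('v, 'e) quiver \<Rightarrow> ('v \<Rightarrow> nat) \<Rightarrow> ('v \<Rightarrow> 'k::field mat) set" where
  "GL Q \<beta> = {g. \<forall>x\<in>Q0 Q. g x \<in> carrier_mat (\<beta> x) (\<beta> x) \<and> det (g x) \<noteq> 0}"

definition mat_inv :: "'k::field mat \<Rightarrow> 'k mat" where
  "mat_inv A = the (mat_inverse A)"

definition act :: "('v, 'e) quiver \<Rightarrow> ('v \<Rightarrow> 'k::field mat) \<Rightarrow> ('e \<Rightarrow> 'k mat) \<Rightarrow> ('e \<Rightarrow> 'k mat)" where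
  "act Q g W = (\<lambda>a. g (hd Q a) * W a * mat_inv (g (tl Q a)))"

inductive_set poly_fun :: "('v, 'e) quiver \<Rightarrow> ('v \<Rightarrow> nat) \<Rightarrow> (('e \<Rightarrow> 'k::field mat) \<Rightarrow> 'k) set"
  for Q :: "('v, 'e) quiver" and \<beta> :: "'v \<Rightarrow> nat" where
  const: "(\<lambda>W. c) \<in> poly_fun Q \<beta>"
| coord: "\<lbrakk>a \<in> Q1 Q; i < \<beta> (hd Q a); j < \<beta> (tl Q a)\<rbrakk> \<Longrightarrow> (\<lambda>W. W a $$ (i, j)) \<in> poly_fun Q \<beta>"
| add: "\<lbrakk>f \<in> poly_fun Q \<beta>; g \<in> poly_fun Q \<beta>\<rbrakk> \<Longrightarrow> (\<lambda>W. f W + g W) \<in> poly_fun Q \<beta>"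
| mult: "\<lbrakk>f \<in> poly_fun Q \<beta>; g \<in> poly_fun Q \<beta>\<rbrakk> \<Longrightarrow> (\<lambda>W. f W * g W) \<in> poly_fun Q \<beta>"

definition character :: "('v, 'e) quiver \<Rightarrow> ('v \<Rightarrow> int) \<Rightarrow> ('v \<Rightarrow> 'k::field mat) \<Rightarrow> 'k" where
  "character Q \<sigma> g = (\<Prod>x\<in>Q0 Q. det (g x) powi \<sigma> x)"

definition SI :: "('v, 'e) quiver \<Rightarrow> ('v \<Rightarrow> nat) \<Rightarrow> ('v \<Rightarrow> int) \<Rightarrow> (('e \<Rightarrow> 'k::field mat) \<Rightarrow> 'k) set" where
  "SI Q \<beta> \<sigma> = {f \<in> poly_fun Q \<beta>.
     \<forall>g\<in>GL Q \<beta>. \<forall>W\<in>Rep Q \<beta>. f (act Q g W) = character Q \<sigma> g * f W}"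

text \<open>S(W) \<subseteq> Z^{Q0} (weights are taken to vanish outside Q0).\<close>
definition S_of :: "('v, 'e) quiver \<Rightarrow> ('v \<Rightarrow> nat) \<Rightarrow> ('e \<Rightarrow> 'k::field mat) \<Rightarrow> ('v \<Rightarrow> int) set" where
  "S_of Q \<beta> W = {\<sigma>. (\<forall>x. x \<notin> Q0 Q \<longrightarrow> \<sigma> x = 0) \<and> (\<exists>f\<in>SI Q \<beta> \<sigma>. f W \<noteq> 0)}"

definition saturated :: "('v \<Rightarrow> int) set \<Rightarrow> bool" where
  "saturated S \<longleftrightarrow> (\<forall>\<sigma> (n::nat). n \<ge> 1 \<longrightarrow> (\<lambda>x. int n * \<sigma> x) \<in> S \<longrightarrow> \<sigma> \<in> S)"

definition property_S :: "'k::field itself \<Rightarrow> ('v, 'e) quiver \<Rightarrow> bool" where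
  "property_S TYPE('k) Q \<longleftrightarrow>
     (\<forall>(\<beta>::'v \<Rightarrow> nat) (W::'e \<Rightarrow> 'k mat). W \<in> Rep Q \<beta> \<longrightarrow> saturated (S_of Q \<beta> W))"

text \<open>The quiver Qbar obtained by deleting v0 and composing b with each a_i.
  Arrows of Qbar: Inl e for the old arrows e \<notin> {b} \<union> A, Inr a for the composite b a (a \<in> A).\<close>
definition contract_quiver :: "('v, 'e) quiver \<Rightarrow> 'v \<Rightarrow> 'e set \<Rightarrow> 'e \<Rightarrow> ('v, 'e + 'e) quiver" where
  "contract_quiver Q v0 A b =
     \<lparr> Q0 = Q0 Q - {v0},
       Q1 = Inl ` (Q1 Q - insert b A) \<union> Inr ` A,
       tl = (\<lambda>e. case e of Inl a \<Rightarrow> tl Q a | Inr a \<Rightarrow> tl Q a),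
       hd = (\<lambda>e. case e of Inl a \<Rightarrow> hd Q a | Inr a \<Rightarrow> hd Q b) \<rparr>"

end

theory Submission
  imports Defs
begin

(* Given a representation W' of the contracted
   quiver Q' of dimension vector beta', extend beta' to Q by beta(v0) = beta'(w), where
   w is the head of b, and extend W' to a representation W of Q by putting W(b) = id
   and W(a_i) = W'(b a_i).  Two polynomial maps relate the representation spaces:
   "compose" (Rep Q -> Rep Q', sending V to the representation with (b a_i) |-> V(b) V(a_i))
   and "extend" (Rep Q' -> Rep Q, as above); both are equivariant for the obvious maps
   between the groups GL, and compose (extend W') = W'.  Semi-invariants pull back along
   equivariant polynomial maps (lemma SI_pullback), so for weights sigma vanishing at v0
   we get S(W') = { sigma in S(W) | sigma(v0) = 0 } (lemma S_of_contract).  Saturation of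
   S(W) then passes to this subset, which proves property (S) for Q'. *)

section \<open>Polynomial functions on representation spaces\<close>

lemma poly_fun_agree:
  assumes "f \<in> poly_fun Q \<beta>" "\<forall>a\<in>Q1 Q. V a = V' a"
  shows "f V = f V'"
  using assms by (induction rule: poly_fun.induct) auto

lemma poly_fun_sum:
  assumes "finite K" "\<forall>k\<in>K. f k \<in> poly_fun Q \<beta>"
  shows "(\<lambda>V. \<Sum>k\<in>K. f k V) \<in> poly_fun Q \<beta>"
  using assms
proof (induction K rule: finite_induct)
  case empty
  then show ?case using poly_fun.const[of 0] by simp
next
  case (insert x F)
  then have "(\<lambda>V. f x V + (\<Sum>k\<in>F. f k V)) \<in> poly_fun Q \<beta>"
    by (intro poly_fun.add) auto
  then show ?case using insert by simp
qed

lemma poly_fun_subst: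
  assumes "f \<in> poly_fun Q \<beta>"
    and "\<And>a i j. a \<in> Q1 Q \<Longrightarrow> i < \<beta> (hd Q a) \<Longrightarrow> j < \<beta> (tl Q a) \<Longrightarrow>
          (\<lambda>V. F V a $$ (i, j)) \<in> poly_fun Q' \<beta>'"
  shows "(\<lambda>V. f (F V)) \<in> poly_fun Q' \<beta>'"
  using assms(1)
proof (induction rule: poly_fun.induct)
  case (const c)
  then show ?case by (rule poly_fun.const)
next
  case (coord a i j)
  then show ?case using assms(2) by auto
next
  case (add f g)
  then show ?case using poly_fun.add by fastforce
next
  case (mult f g)
  then show ?case using poly_fun.mult by fastforce
qed

lemma mat_inv_props:
  fixes M :: "'k::field mat"
  assumes "M \<in> carrier_mat n n" "det M \<noteq> 0"
  shows "mat_inv M \<in> carrier_mat n n" "M * mat_inv M = 1\<^sub>m n" "mat_inv M * M = 1\<^sub>m n"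
proof -
  have "M \<in> Units (ring_mat TYPE('k) n undefined)"
    using det_non_zero_imp_unit[OF assms] .
  then obtain B where B: "mat_inverse M = Some B"
    using mat_inverse(1)[OF assms(1), of undefined] by (cases "mat_inverse M") auto
  from mat_inverse(2)[OF assms(1) B] B show
    "mat_inv M \<in> carrier_mat n n" "M * mat_inv M = 1\<^sub>m n" "mat_inv M * M = 1\<^sub>m n"
    unfolding mat_inv_def by auto
qed

text \<open>Composing two transformed arrows through a common vertex cancels the group element
  at that vertex: (G B H^-1)(H X K) = G (B X) K.\<close>
lemma mult_conj_cancel:
  fixes G :: "'k::field mat"
  assumes G: "G \<in> carrier_mat n n" and B: "B \<in> carrier_mat n m" and H: "H \<in> carrier_mat m m"
    and Hi: "Hi \<in> carrier_mat m m" and HH: "Hi * H = 1\<^sub>m m"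
    and X: "X \<in> carrier_mat m p" and K: "K \<in> carrier_mat p p"
  shows "(G * B * Hi) * (H * X * K) = G * (B * X) * K"
proof -
  have XK: "X * K \<in> carrier_mat m p" using X K by simp
  have "(G * B * Hi) * (H * X * K) = (G * B) * (Hi * (H * (X * K)))"
    using assoc_mult_mat[OF _ Hi, of "G * B" n "H * X * K" p] assoc_mult_mat[OF H X K] G B H X K
    by simp
  also have "Hi * (H * (X * K)) = X * K"
    using assoc_mult_mat[OF Hi H XK] HH left_mult_one_mat[OF XK] by simp
  also have "(G * B) * (X * K) = G * (B * X) * K"
    using assoc_mult_mat[OF G B XK] assoc_mult_mat[OF B X K]
      assoc_mult_mat[OF G _ K, of "B * X"] B X by simp
  finally show ?thesis .
qed

section \<open>Semi-invariants\<close>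

lemma Rep_arrow: "V \<in> Rep Q \<beta> \<Longrightarrow> a \<in> Q1 Q \<Longrightarrow> V a \<in> carrier_mat (\<beta> (hd Q a)) (\<beta> (tl Q a))"
  unfolding Rep_def by blast

lemma act_Rep:
  assumes "wf_quiver Q" "g \<in> GL Q \<beta>" "(V :: 'e \<Rightarrow> 'k::field mat) \<in> Rep Q \<beta>"
  shows "act Q g V \<in> Rep Q \<beta>"
  unfolding Rep_def mem_Collect_eq
proof (intro ballI)
  fix a assume a: "a \<in> Q1 Q"
  then have h: "hd Q a \<in> Q0 Q" and t: "tl Q a \<in> Q0 Q"
    using assms(1) unfolding wf_quiver_def by auto
  have "g (hd Q a) \<in> carrier_mat (\<beta> (hd Q a)) (\<beta> (hd Q a))"
    using assms(2) h unfolding GL_def by auto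
  moreover have "mat_inv (g (tl Q a)) \<in> carrier_mat (\<beta> (tl Q a)) (\<beta> (tl Q a))"
    using assms(2) t mat_inv_props(1) unfolding GL_def by blast
  moreover note Rep_arrow[OF assms(3) a]
  ultimately show "act Q g V a \<in> carrier_mat (\<beta> (hd Q a)) (\<beta> (tl Q a))"
    unfolding act_def by auto
qed

lemma SI_pullback:
  fixes Q :: "('v, 'e) quiver" and Q' :: "('v', 'e') quiver"
    and F :: "('e' \<Rightarrow> 'k::field mat) \<Rightarrow> 'e \<Rightarrow> 'k mat"
  assumes f: "f \<in> SI Q \<beta> \<sigma>"
    and poly: "\<And>a i j. a \<in> Q1 Q \<Longrightarrow> i < \<beta> (hd Q a) \<Longrightarrow> j < \<beta> (tl Q a) \<Longrightarrow>
          (\<lambda>V. F V a $$ (i, j)) \<in> poly_fun Q' \<beta>'"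
    and Rep: "\<And>V. V \<in> Rep Q' \<beta>' \<Longrightarrow> F V \<in> Rep Q \<beta>"
    and equiv: "\<And>g. g \<in> GL Q' \<beta>' \<Longrightarrow> \<exists>h\<in>GL Q \<beta>. character Q \<sigma> h = character Q' \<sigma>' g \<and>
          (\<forall>V\<in>Rep Q' \<beta>'. \<forall>a\<in>Q1 Q. F (act Q' g V) a = act Q h (F V) a)"
  shows "(\<lambda>V. f (F V)) \<in> SI Q' \<beta>' \<sigma>'"
  unfolding SI_def mem_Collect_eq
proof (intro conjI ballI)
  have fpoly: "f \<in> poly_fun Q \<beta>" using f unfolding SI_def by auto
  then show "(\<lambda>V. f (F V)) \<in> poly_fun Q' \<beta>'" using poly by (rule poly_fun_subst)
  fix g :: "'v' \<Rightarrow> 'k mat" and V :: "'e' \<Rightarrow> 'k mat"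
  assume g: "g \<in> GL Q' \<beta>'" and V: "V \<in> Rep Q' \<beta>'"
  obtain h where h: "h \<in> GL Q \<beta>" "character Q \<sigma> h = character Q' \<sigma>' g"
    and intertwine: "\<forall>a\<in>Q1 Q. F (act Q' g V) a = act Q h (F V) a"
    using equiv[OF g] V by blast
  have "f (F (act Q' g V)) = f (act Q h (F V))"
    using poly_fun_agree[OF fpoly intertwine] .
  also have "\<dots> = character Q \<sigma> h * f (F V)"
    using f h(1) Rep[OF V] unfolding SI_def by auto
  finally show "f (F (act Q' g V)) = character Q' \<sigma>' g * f (F V)"
    using h(2) by simp
qed

lemma saturated_vanishing_at:
  assumes "saturated S"
  shows "saturated {\<sigma> \<in> S. \<sigma> v = 0}"
  unfolding saturated_def
proof (intro allI impI)
  fix \<sigma> and n :: nat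
  assume n: "1 \<le> n" and n\<sigma>: "(\<lambda>x. int n * \<sigma> x) \<in> {\<sigma> \<in> S. \<sigma> v = 0}"
  then have "\<sigma> \<in> S" using assms unfolding saturated_def by blast
  moreover have "\<sigma> v = 0" using n n\<sigma> by simp
  ultimately show "\<sigma> \<in> {\<sigma> \<in> S. \<sigma> v = 0}" by simp
qed

lemma character_prod_remove:
  assumes "finite S" "v0 \<in> S" "\<sigma> v0 = 0" "\<forall>x\<in>S-{v0}. g x = g' x"
  shows "(\<Prod>x\<in>S. det (g x) powi \<sigma> x) = (\<Prod>x\<in>S-{v0}. det (g' x) powi \<sigma> x)"
  using assms by (simp add: prod.remove)

section \<open>Contracting a vertex with a single outgoing arrow\<close>

locale vertex_contraction =
  fixes Q :: "('v, 'e) quiver" and v0 :: 'v and A :: "'e set" and b :: 'e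
  assumes wf: "wf_quiver Q"
    and acyc: "no_oriented_cycles Q"
    and v0: "v0 \<in> Q0 Q"
    and b: "b \<in> Q1 Q"
    and into_v0: "{a \<in> Q1 Q. hd Q a = v0} = A"
    and out_of_v0: "{a \<in> Q1 Q. tl Q a = v0} = {b}"
begin

abbreviation Qc :: "('v, 'e + 'e) quiver" where
  "Qc \<equiv> contract_quiver Q v0 A b"

definition w :: 'v where
  "w = hd Q b"

text \<open>Acyclicity is only used to exclude loops.\<close>
lemma no_loop:
  assumes "a \<in> Q1 Q"
  shows "tl Q a \<noteq> hd Q a"
proof
  assume "tl Q a = hd Q a"
  then have "(hd Q a, hd Q a) \<in> {(tl Q a, hd Q a) | a. a \<in> Q1 Q}" using assms by force
  then show False using acyc unfolding no_oriented_cycles_def acyclic_def by blast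
qed

lemma A_arrow:
  assumes "a \<in> A"
  shows "a \<in> Q1 Q" "hd Q a = v0" "tl Q a \<noteq> v0"
proof -
  show a: "a \<in> Q1 Q" and h: "hd Q a = v0" using assms into_v0 by auto
  show "tl Q a \<noteq> v0" using no_loop[OF a] h by simp
qed

lemma b_tl: "tl Q b = v0"
  using out_of_v0 by blast

lemma w_ne: "w \<noteq> v0"
  using no_loop[OF b] b_tl unfolding w_def by auto

lemma w_in: "w \<in> Q0 Q"
  using wf b unfolding wf_quiver_def w_def by auto

lemma b_notin_A: "b \<notin> A"
  using A_arrow w_ne unfolding w_def by blast

lemma other_arrow:
  assumes "e \<in> Q1 Q" "e \<notin> insert b A"
  shows "hd Q e \<noteq> v0 \<and> tl Q e \<noteq> v0"
proof
  show "hd Q e \<noteq> v0" using assms into_v0 by auto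
  show "tl Q e \<noteq> v0" using assms out_of_v0 by auto
qed

lemma Qc_simps:
  "Q0 Qc = Q0 Q - {v0}" "Q1 Qc = Inl ` (Q1 Q - insert b A) \<union> Inr ` A"
  "tl Qc (Inl e) = tl Q e" "tl Qc (Inr e) = tl Q e"
  "hd Qc (Inl e) = hd Q e" "hd Qc (Inr e) = w"
  unfolding contract_quiver_def w_def by auto

lemma Qc_arrow_cases:
  assumes "a \<in> Q1 Qc"
  obtains (old) e where "a = Inl e" "e \<in> Q1 Q" "e \<notin> insert b A"
    | (composite) x where "a = Inr x" "x \<in> A"
  using assms unfolding Qc_simps by auto

lemma character_contract:
  assumes "\<sigma> v0 = 0" "\<forall>x. x \<noteq> v0 \<longrightarrow> g x = g' x"
  shows "character Q \<sigma> g = character Qc \<sigma> g'"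
  unfolding character_def Qc_simps
  using character_prod_remove[of "Q0 Q" v0 \<sigma> g g'] wf v0 assms
  unfolding wf_quiver_def by auto

definition ext_dim :: "('v \<Rightarrow> nat) \<Rightarrow> 'v \<Rightarrow> nat" where
  "ext_dim \<beta> = \<beta>(v0 := \<beta> w)"

lemma ext_dim_simps: "x \<noteq> v0 \<Longrightarrow> ext_dim \<beta> x = \<beta> x" "ext_dim \<beta> v0 = \<beta> w"
  unfolding ext_dim_def by auto

definition extend :: "('v \<Rightarrow> nat) \<Rightarrow> ('e + 'e \<Rightarrow> 'k::field mat) \<Rightarrow> 'e \<Rightarrow> 'k mat" where
  "extend \<beta> V e = (if e = b then 1\<^sub>m (\<beta> w) else if e \<in> A then V (Inr e) else V (Inl e))"

text \<open>Composition along v0; the product V(b) V(a) is written entrywise so that its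
  coordinates are visibly polynomial.\<close>
definition compose :: "('v \<Rightarrow> nat) \<Rightarrow> ('e \<Rightarrow> 'k::field mat) \<Rightarrow> 'e + 'e \<Rightarrow> 'k mat" where
  "compose \<beta> V e = (case e of Inl x \<Rightarrow> V x
     | Inr a \<Rightarrow> mat (\<beta> w) (\<beta> (tl Q a)) (\<lambda>(i, j). \<Sum>k<\<beta> w. V b $$ (i, k) * V a $$ (k, j)))"

lemma Rep_Qc_Inr: "V \<in> Rep Qc \<beta> \<Longrightarrow> a \<in> A \<Longrightarrow> V (Inr a) \<in> carrier_mat (\<beta> w) (\<beta> (tl Q a))"
  using Rep_arrow[of V Qc \<beta> "Inr a"] by (simp add: Qc_simps)

lemma Rep_Qc_Inl:
  "V \<in> Rep Qc \<beta> \<Longrightarrow> e \<in> Q1 Q \<Longrightarrow> e \<notin> insert b A \<Longrightarrow>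
     V (Inl e) \<in> carrier_mat (\<beta> (hd Q e)) (\<beta> (tl Q e))"
  using Rep_arrow[of V Qc \<beta> "Inl e"] by (simp add: Qc_simps)

lemma Rep_ext_b: "V \<in> Rep Q (ext_dim \<beta>) \<Longrightarrow> V b \<in> carrier_mat (\<beta> w) (\<beta> w)"
  using Rep_arrow[OF _ b, of V "ext_dim \<beta>"] b_tl w_ne by (simp add: w_def[symmetric] ext_dim_simps)

lemma Rep_ext_A: "V \<in> Rep Q (ext_dim \<beta>) \<Longrightarrow> a \<in> A \<Longrightarrow> V a \<in> carrier_mat (\<beta> w) (\<beta> (tl Q a))"
  using Rep_arrow[OF _ A_arrow(1), of V "ext_dim \<beta>" a] A_arrow(2,3)[of a] by (simp add: ext_dim_simps)

lemma Rep_ext_other: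
  "V \<in> Rep Q (ext_dim \<beta>) \<Longrightarrow> e \<in> Q1 Q \<Longrightarrow> e \<notin> insert b A \<Longrightarrow>
     V e \<in> carrier_mat (\<beta> (hd Q e)) (\<beta> (tl Q e))"
  using Rep_arrow[of V Q "ext_dim \<beta>" e] other_arrow[of e] by (simp add: ext_dim_simps)

lemma extend_Rep:
  assumes V: "V \<in> Rep Qc \<beta>"
  shows "extend \<beta> V \<in> Rep Q (ext_dim \<beta>)"
  unfolding Rep_def[of Q] mem_Collect_eq
proof (intro ballI)
  fix e assume e: "e \<in> Q1 Q"
  consider "e = b" | "e \<in> A" | "e \<notin> insert b A" by blast
  then show "extend \<beta> V e \<in> carrier_mat (ext_dim \<beta> (hd Q e)) (ext_dim \<beta> (tl Q e))"
  proof cases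
    case 1
    then show ?thesis using b_tl w_ne by (simp add: extend_def ext_dim_simps w_def[symmetric])
  next
    case 2
    then show ?thesis using b_notin_A A_arrow[OF 2] Rep_Qc_Inr[OF V 2]
      by (auto simp: extend_def ext_dim_simps)
  next
    case 3
    then show ?thesis using other_arrow[OF e 3] Rep_Qc_Inl[OF V e 3]
      by (auto simp: extend_def ext_dim_simps)
  qed
qed

lemma compose_Inr:
  assumes "V \<in> Rep Q (ext_dim \<beta>)" "a \<in> A"
  shows "compose \<beta> V (Inr a) = V b * V a"
  using Rep_ext_b[OF assms(1)] Rep_ext_A[OF assms]
  by (intro eq_matI) (auto simp: compose_def scalar_prod_def atLeast0LessThan)

lemma compose_Rep: "V \<in> Rep Q (ext_dim \<beta>) \<Longrightarrow> compose \<beta> V \<in> Rep Qc \<beta>"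
  unfolding Rep_def[of Qc] mem_Collect_eq
proof (intro ballI)
  fix a assume V: "V \<in> Rep Q (ext_dim \<beta>)" and a: "a \<in> Q1 Qc"
  from a show "compose \<beta> V a \<in> carrier_mat (\<beta> (hd Qc a)) (\<beta> (tl Qc a))"
  proof (cases rule: Qc_arrow_cases)
    case (old e)
    then show ?thesis using Rep_ext_other[OF V] by (simp add: compose_def Qc_simps)
  next
    case (composite x)
    then show ?thesis using compose_Inr[OF V] Rep_ext_b[OF V] Rep_ext_A[OF V] by (simp add: Qc_simps)
  qed
qed

lemma compose_extend:
  assumes V: "V \<in> Rep Qc \<beta>"
  shows "\<forall>a\<in>Q1 Qc. compose \<beta> (extend \<beta> V) a = V a"
proof
  fix a assume "a \<in> Q1 Qc"
  then show "compose \<beta> (extend \<beta> V) a = V a"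
  proof (cases rule: Qc_arrow_cases)
    case (old e)
    then show ?thesis by (auto simp: compose_def extend_def)
  next
    case (composite x)
    then have "compose \<beta> (extend \<beta> V) a = extend \<beta> V b * extend \<beta> V x"
      using compose_Inr[OF extend_Rep[OF V]] by simp
    also have "\<dots> = V a"
      using composite b_notin_A left_mult_one_mat[OF Rep_Qc_Inr[OF V composite(2)]]
      unfolding extend_def by auto
    finally show ?thesis .
  qed
qed

lemma extend_poly:
  assumes "e \<in> Q1 Q" "i < ext_dim \<beta> (hd Q e)" "j < ext_dim \<beta> (tl Q e)"
  shows "(\<lambda>V. extend \<beta> V e $$ (i, j)) \<in> poly_fun Qc \<beta>"
proof -
  consider "e = b" | "e \<in> A" | "e \<notin> insert b A" by blast
  then show ?thesis
  proof cases
    case 1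
    then show ?thesis unfolding extend_def using poly_fun.const by simp
  next
    case 2
    have "e \<noteq> b" using 2 b_notin_A by blast
    have "(\<lambda>V. V (Inr e) $$ (i, j)) \<in> poly_fun Qc \<beta>"
      using 2 assms A_arrow[OF 2]
      by (intro poly_fun.coord) (auto simp: Qc_simps ext_dim_simps)
    then show ?thesis using 2 \<open>e \<noteq> b\<close> unfolding extend_def by auto
  next
    case 3
    have "(\<lambda>V. V (Inl e) $$ (i, j)) \<in> poly_fun Qc \<beta>"
      using 3 assms other_arrow[OF assms(1) 3]
      by (intro poly_fun.coord) (auto simp: Qc_simps ext_dim_simps)
    then show ?thesis using 3 unfolding extend_def by auto
  qed
qed

lemma compose_poly:
  assumes "a \<in> Q1 Qc" "i < \<beta> (hd Qc a)" "j < \<beta> (tl Qc a)"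
  shows "(\<lambda>V. compose \<beta> V a $$ (i, j)) \<in> poly_fun Q (ext_dim \<beta>)"
  using assms(1)
proof (cases rule: Qc_arrow_cases)
  case (old e)
  then have "(\<lambda>V. V e $$ (i, j)) \<in> poly_fun Q (ext_dim \<beta>)"
    using assms other_arrow[OF old(2,3)]
    by (intro poly_fun.coord) (auto simp: Qc_simps ext_dim_simps)
  then show ?thesis using old by (simp add: compose_def)
next
  case (composite x)
  have i: "i < \<beta> w" and j: "j < \<beta> (tl Q x)" using assms composite by (auto simp: Qc_simps)
  have "(\<lambda>V. V b $$ (i, k) * V x $$ (k, j)) \<in> poly_fun Q (ext_dim \<beta>)" if "k < \<beta> w" for k
    using b b_tl w_ne A_arrow[OF composite(2)] i j that
    by (intro poly_fun.mult poly_fun.coord) (auto simp: ext_dim_simps w_def)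
  then have "(\<lambda>V. \<Sum>k<\<beta> w. V b $$ (i, k) * V x $$ (k, j)) \<in> poly_fun Q (ext_dim \<beta>)"
    by (intro poly_fun_sum) auto
  then show ?thesis using composite i j by (simp add: compose_def)
qed

text \<open>extend intertwines g' \<in> GL(beta) with its extension by g'(w) at v0.\<close>
lemma extend_equivariant:
  fixes g' :: "'v \<Rightarrow> 'k::field mat"
  assumes g': "g' \<in> GL Qc \<beta>" and \<sigma>: "\<sigma> v0 = 0"
  shows "\<exists>g\<in>GL Q (ext_dim \<beta>). character Q \<sigma> g = character Qc \<sigma> g' \<and>
           (\<forall>V\<in>Rep Qc \<beta>. \<forall>e\<in>Q1 Q. extend \<beta> (act Qc g' V) e = act Q g (extend \<beta> V) e)"
proof (intro bexI conjI ballI)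
  define g where "g = g'(v0 := g' w)"
  have g'Q: "g' x \<in> carrier_mat (\<beta> x) (\<beta> x) \<and> det (g' x) \<noteq> 0" if "x \<in> Q0 Q" "x \<noteq> v0" for x
    using g' that unfolding GL_def Qc_simps by auto
  note gw = g'Q[OF w_in w_ne]
  show "g \<in> GL Q (ext_dim \<beta>)"
    using g'Q gw unfolding GL_def g_def by (auto simp: ext_dim_simps)
  show "character Q \<sigma> g = character Qc \<sigma> g'"
    by (rule character_contract[where \<sigma> = \<sigma>, OF \<sigma>]) (simp add: g_def)
  fix V :: "'e + 'e \<Rightarrow> 'k mat" and e
  assume e: "e \<in> Q1 Q"
  consider "e = b" | "e \<in> A" | "e \<notin> insert b A" by blast
  then show "extend \<beta> (act Qc g' V) e = act Q g (extend \<beta> V) e"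
  proof cases
    case 1
    have "act Q g (extend \<beta> V) e = g' w * 1\<^sub>m (\<beta> w) * mat_inv (g' w)"
      unfolding act_def extend_def g_def using 1 b_tl w_ne w_def by simp
    also have "\<dots> = 1\<^sub>m (\<beta> w)"
      using gw right_mult_one_mat[of "g' w"] mat_inv_props(2)[of "g' w" "\<beta> w"] by auto
    finally show ?thesis using 1 unfolding extend_def by simp
  next
    case 2
    then show ?thesis using b_notin_A A_arrow[OF 2]
      unfolding extend_def act_def g_def by (auto simp: Qc_simps)
  next
    case 3
    then show ?thesis using other_arrow[OF e 3]
      unfolding extend_def act_def g_def by (auto simp: Qc_simps)
  qed
qed

text \<open>compose intertwines g \<in> GL(ext_dim beta) with g itself: the factor at v0 cancels.\<close>
lemma compose_equivariant:
  fixes g :: "'v \<Rightarrow> 'k::field mat"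
  assumes g: "g \<in> GL Q (ext_dim \<beta>)" and \<sigma>: "\<sigma> v0 = 0"
  shows "\<exists>h\<in>GL Qc \<beta>. character Qc \<sigma> h = character Q \<sigma> g \<and>
           (\<forall>V\<in>Rep Q (ext_dim \<beta>). \<forall>a\<in>Q1 Qc. compose \<beta> (act Q g V) a = act Qc h (compose \<beta> V) a)"
proof (intro bexI conjI ballI)
  have gQ: "g x \<in> carrier_mat (ext_dim \<beta> x) (ext_dim \<beta> x) \<and> det (g x) \<noteq> 0" if "x \<in> Q0 Q" for x
    using g that unfolding GL_def by auto
  show "g \<in> GL Qc \<beta>"
    unfolding GL_def Qc_simps
  proof (intro CollectI ballI)
    fix x assume "x \<in> Q0 Q - {v0}"
    then show "g x \<in> carrier_mat (\<beta> x) (\<beta> x) \<and> det (g x) \<noteq> 0"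
      using gQ[of x] ext_dim_simps(1)[of x \<beta>] by auto
  qed
  show "character Qc \<sigma> g = character Q \<sigma> g"
    by (rule character_contract[where \<sigma> = \<sigma>, OF \<sigma>, symmetric]) simp
  fix V :: "'e \<Rightarrow> 'k mat" and a
  assume V: "V \<in> Rep Q (ext_dim \<beta>)" and a: "a \<in> Q1 Qc"
  from a show "compose \<beta> (act Q g V) a = act Qc g (compose \<beta> V) a"
  proof (cases rule: Qc_arrow_cases)
    case (old e)
    then show ?thesis by (simp add: compose_def act_def Qc_simps)
  next
    case (composite x)
    note x = A_arrow[OF composite(2)]
    have tx: "tl Q x \<in> Q0 Q" using wf x unfolding wf_quiver_def by auto
    have gw: "g w \<in> carrier_mat (\<beta> w) (\<beta> w)" using gQ[OF w_in] w_ne by (simp add: ext_dim_simps)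
    have gv0: "g v0 \<in> carrier_mat (\<beta> w) (\<beta> w)" "det (g v0) \<noteq> 0"
      using gQ[OF v0] by (auto simp: ext_dim_simps)
    have gx: "mat_inv (g (tl Q x)) \<in> carrier_mat (\<beta> (tl Q x)) (\<beta> (tl Q x))"
      using mat_inv_props(1)[of "g (tl Q x)"] gQ[OF tx] x by (simp add: ext_dim_simps)
    have "compose \<beta> (act Q g V) a = act Q g V b * act Q g V x"
      using compose_Inr[OF act_Rep[OF wf g V] composite(2)] composite by simp
    also have "\<dots> = (g w * V b * mat_inv (g v0)) * (g v0 * V x * mat_inv (g (tl Q x)))"
      unfolding act_def using b_tl x w_def by simp
    also have "\<dots> = g w * (V b * V x) * mat_inv (g (tl Q x))"
      by (rule mult_conj_cancel[OF gw Rep_ext_b[OF V] gv0(1) mat_inv_props(1)[OF gv0]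
            mat_inv_props(3)[OF gv0] Rep_ext_A[OF V composite(2)] gx])
    also have "\<dots> = act Qc g (compose \<beta> V) a"
      unfolding act_def using composite compose_Inr[OF V composite(2)] by (simp add: Qc_simps)
    finally show ?thesis .
  qed
qed

lemma SI_extend:
  assumes "f \<in> SI Q (ext_dim \<beta>) \<sigma>" "\<sigma> v0 = 0"
  shows "(\<lambda>V. f (extend \<beta> V)) \<in> SI Qc \<beta> \<sigma>"
  using assms(1) extend_poly extend_Rep extend_equivariant[where \<sigma> = \<sigma>, OF _ assms(2)]
  by (rule SI_pullback[where F = "extend \<beta>"])

lemma SI_compose:
  assumes "f \<in> SI Qc \<beta> \<sigma>" "\<sigma> v0 = 0"
  shows "(\<lambda>V. f (compose \<beta> V)) \<in> SI Q (ext_dim \<beta>) \<sigma>"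
  using assms(1) compose_poly compose_Rep compose_equivariant[where \<sigma> = \<sigma>, OF _ assms(2)]
  by (rule SI_pullback[where F = "compose \<beta>"])

lemma S_of_contract:
  assumes V: "V \<in> Rep Qc \<beta>"
  shows "S_of Qc \<beta> V = {\<sigma> \<in> S_of Q (ext_dim \<beta>) (extend \<beta> V). \<sigma> v0 = 0}"
proof (intro equalityI subsetI)
  have compose_extend_val: "f (compose \<beta> (extend \<beta> V)) = f V" if "f \<in> SI Qc \<beta> \<sigma>" for f \<sigma>
    using poly_fun_agree[OF _ compose_extend[OF V]] that unfolding SI_def by auto
  fix \<sigma>
  assume "\<sigma> \<in> S_of Qc \<beta> V"
  then obtain f where f: "f \<in> SI Qc \<beta> \<sigma>" "f V \<noteq> 0"
    and supp: "\<forall>x. x \<notin> Q0 Q - {v0} \<longrightarrow> \<sigma> x = 0"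
    unfolding S_of_def Qc_simps by auto
  then have \<sigma>: "\<sigma> v0 = 0" and supp_Q: "\<forall>x. x \<notin> Q0 Q \<longrightarrow> \<sigma> x = 0" by auto
  have "\<exists>f'\<in>SI Q (ext_dim \<beta>) \<sigma>. f' (extend \<beta> V) \<noteq> 0"
    using SI_compose[OF f(1) \<sigma>] compose_extend_val[OF f(1)] f(2)
    by (intro bexI[where x = "\<lambda>W. f (compose \<beta> W)"]) simp_all
  with supp_Q \<sigma>
  show "\<sigma> \<in> {\<sigma> \<in> S_of Q (ext_dim \<beta>) (extend \<beta> V). \<sigma> v0 = 0}"
    unfolding S_of_def by blast
next
  fix \<sigma>
  assume "\<sigma> \<in> {\<sigma> \<in> S_of Q (ext_dim \<beta>) (extend \<beta> V). \<sigma> v0 = 0}"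
  then obtain f where f: "f \<in> SI Q (ext_dim \<beta>) \<sigma>" "f (extend \<beta> V) \<noteq> 0"
    and supp: "\<forall>x. x \<notin> Q0 Q \<longrightarrow> \<sigma> x = 0" and \<sigma>: "\<sigma> v0 = 0"
    unfolding S_of_def by auto
  have supp_Qc: "\<forall>x. x \<notin> Q0 Qc \<longrightarrow> \<sigma> x = 0"
    using supp \<sigma> unfolding Qc_simps by auto
  moreover have "\<exists>f'\<in>SI Qc \<beta> \<sigma>. f' V \<noteq> 0"
    using SI_extend[OF f(1) \<sigma>] f(2)
    by (intro bexI[where x = "\<lambda>W. f (extend \<beta> W)"]) simp_all
  ultimately show "\<sigma> \<in> S_of Qc \<beta> V"
    unfolding S_of_def by blast
qed

end

theorem proposition4p8:
  fixes Q :: "('v, 'e) quiver" and v0 :: 'v and A :: "'e set" and b :: 'e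
  assumes "wf_quiver Q"
    and "no_oriented_cycles Q"
    and "v0 \<in> Q0 Q"
    and "A \<subseteq> Q1 Q" and "b \<in> Q1 Q"
    and "{a \<in> Q1 Q. hd Q a = v0} = A"
    and "{a \<in> Q1 Q. tl Q a = v0} = {b}"
    and "property_S TYPE('k::{alg_closed_field, field_char_0}) Q"
  shows "property_S TYPE('k) (contract_quiver Q v0 A b)"
proof -
  interpret vertex_contraction Q v0 A b
    using assms by unfold_locales
  show ?thesis
    unfolding property_S_def
  proof (intro allI impI)
    fix \<beta> :: "'v \<Rightarrow> nat" and V :: "'e + 'e \<Rightarrow> 'k mat"
    assume V: "V \<in> Rep Qc \<beta>"
    have "saturated (S_of Q (ext_dim \<beta>) (extend \<beta> V))"
      using assms(8) extend_Rep[OF V] unfolding property_S_def by blast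
    then show "saturated (S_of Qc \<beta> V)"
      unfolding S_of_contract[OF V] by (rule saturated_vanishing_at)
  qed
qed

end
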